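(* Assume the setting and hypotheses of the time-triggered learning rule with integer parameter $a\ge2$, and conditions (i) $\mathcal{S}(\theta_p,\theta_q)\ne\emptyset$ for all distinct $\theta_p,\theta_q\in\Theta$, (ii) $\mathcal{G}$ strongly connected, (iii) $\pi_{i,0}(\theta)>0,\mu_{i,0}(\theta)>0$ for all $i,\theta$. Then there exists a set $\bar\Omega\subseteq\Omega$ with $\mathbb{P}^{\theta^\star}(\bar\Omega)=1$ such that for each $\omega\in\bar\Omega$ there exist constants $\eta(\omega)\in(0,1)$ and $t'(\omega)\in(0,\infty)$ with $$\pi_{i,t}(\theta^\star)\ge\eta(\omega)\quad\text{and}\quad\mu_{i,t}(\theta^\star)\ge\eta(\omega)\qquad\forall t\ge t'(\omega),\ \forall i\in\mathcal{V}.$$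
   Context: Agents $\mathcal{V}=\{1,\dots,n\}$ interact over a directed graph $\mathcal{G}=(\mathcal{V},\mathcal{E})$; $(j,i)\in\mathcal{E}$ means $j$ can send to $i$, and $\mathcal{N}_i=\{j:(j,i)\in\mathcal{E}\}$. $\Theta=\{\theta_1,\dots,\theta_m\}$ finite hypotheses, $\theta^\star$ the fixed true state. Agent $i$ has finite signal space $\mathcal{S}_i$ and known marginals $l_i(\cdot|\theta)$ of joint likelihoods $l(\cdot|\theta)$ on $\mathcal{S}=\prod_i\mathcal{S}_i$, with $l_i(w_i|\theta)>0$ for all $w_i,\theta$. Profiles $s_t$ ($t\in\mathbb{N}_+$) are i.i.d. over time with law $l(\cdot|\theta^\star)$; $\Omega$ is the set of sequences $(s_1,s_2,\dots)$ with product measure $\mathbb{P}^{\theta^\star}$. $K_i(\theta_p,\theta_q)=D(l_i(\cdot|\theta_p)\|l_i(\cdot|\theta_q))$; $\mathcal{S}(\theta_p,\theta_q)=\{i:K_i(\theta_p,\theta_q)>0\}$. Rule with parameter $a\in\mathbb{N}_+$: $\mathbb{I}=\{t_k\}_{k\in\mathbb{N}_+}$, $t_1=1$, $t_{k+1}-t_k=a^k$. For all $t\in\mathbb{N}$: $\pi_{i,t+1}(\theta)=\dfrac{l_i(s_{i,t+1}|\theta)\pi_{i,t}(\theta)}{\sum_p l_i(s_{i,t+1}|\theta_p)\pi_{i,t}(\theta_p)}$; if $t+1\in\mathbb{I}$, $\mu_{i,t+1}(\theta)=\dfrac{\min\{\{\mu_{j,t}(\theta)\}_{j\in\mathcal{N}_i},\pi_{i,t+1}(\theta)\}}{\sum_p\min\{\{\mu_{j,t}(\theta_p)\}_{j\in\mathcal{N}_i},\pi_{i,t+1}(\theta_p)\}}$;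 otherwise $\mu_{i,t+1}(\theta)=\mu_{i,t}(\theta)$. *)

theory Defs
  imports "HOL-Probability.Probability"
begin

text \<open>Agents have type 'v (finite), hypotheses type 'h (finite), a signal profile is a
  function 'v \<Rightarrow> 's.  The joint likelihood of a profile under hypothesis \<theta> is the pmf L \<theta>.
  A sample path \<omega> :: nat \<Rightarrow> ('v \<Rightarrow> 's) lists the profiles (s_1, s_2, ...),
  i.e. s_t = \<omega> (t - 1).\<close>

definition marg :: "('h \<Rightarrow> ('v \<Rightarrow> 's) pmf) \<Rightarrow> 'v \<Rightarrow> 'h \<Rightarrow> 's \<Rightarrow> real" where
  "marg L i \<theta> w = pmf (map_pmf (\<lambda>s. s i) (L \<theta>)) w"

definition KLi :: "('v \<Rightarrow> 's set) \<Rightarrow> ('h \<Rightarrow> ('v \<Rightarrow> 's) pmf) \<Rightarrow> 'v \<Rightarrow> 'h \<Rightarrow> 'h \<Rightarrow> real" where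
  "KLi Sig L i p q = (\<Sum>w\<in>Sig i. marg L i p w * ln (marg L i p w / marg L i q w))"

text \<open>Trigger times: trig a 0 = t_1 = 1, trig a k = t_{k+1}, t_{k+1} - t_k = a^k.\<close>
fun trig :: "nat \<Rightarrow> nat \<Rightarrow> nat" where
  "trig a 0 = 1"
| "trig a (Suc k) = trig a k + a ^ (Suc k)"

definition trigset :: "nat \<Rightarrow> nat set" where
  "trigset a = range (trig a)"

fun pib :: "('h \<Rightarrow> ('v \<Rightarrow> 's) pmf) \<Rightarrow> ('v \<Rightarrow> 'h \<Rightarrow> real) \<Rightarrow> (nat \<Rightarrow> 'v \<Rightarrow> 's)
            \<Rightarrow> nat \<Rightarrow> 'v \<Rightarrow> 'h::finite \<Rightarrow> real" where
  "pib L pi0 \<omega> 0 i \<theta> = pi0 i \<theta>"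
| "pib L pi0 \<omega> (Suc t) i \<theta> =
     marg L i \<theta> (\<omega> t i) * pib L pi0 \<omega> t i \<theta> /
     (\<Sum>p\<in>UNIV. marg L i p (\<omega> t i) * pib L pi0 \<omega> t i p)"

fun mub :: "nat \<Rightarrow> ('v \<times> 'v) set \<Rightarrow> ('h \<Rightarrow> ('v \<Rightarrow> 's) pmf) \<Rightarrow> ('v \<Rightarrow> 'h \<Rightarrow> real)
            \<Rightarrow> ('v \<Rightarrow> 'h \<Rightarrow> real) \<Rightarrow> (nat \<Rightarrow> 'v \<Rightarrow> 's) \<Rightarrow> nat \<Rightarrow> 'v \<Rightarrow> 'h::finite \<Rightarrow> real" where
  "mub a E L pi0 mu0 \<omega> 0 i \<theta> = mu0 i \<theta>"
| "mub a E L pi0 mu0 \<omega> (Suc t) i \<theta> =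
     (if Suc t \<in> trigset a then
        Min (insert (pib L pi0 \<omega> (Suc t) i \<theta>) ((\<lambda>j. mub a E L pi0 mu0 \<omega> t j \<theta>) ` {j. (j, i) \<in> E})) /
        (\<Sum>p\<in>UNIV. Min (insert (pib L pi0 \<omega> (Suc t) i p) ((\<lambda>j. mub a E L pi0 mu0 \<omega> t j p) ` {j. (j, i) \<in> E})))
      else mub a E L pi0 mu0 \<omega> t i \<theta>)"

definition pathM :: "('h \<Rightarrow> ('v \<Rightarrow> 's) pmf) \<Rightarrow> 'h \<Rightarrow> (nat \<Rightarrow> 'v \<Rightarrow> 's) measure" where
  "pathM L \<theta>s = Pi\<^sub>M UNIV (\<lambda>_::nat. measure_pmf (L \<theta>s))"

end

theory Submission
  imports Defs
begin

text \<open>By Bayes' rule, the ratio \<open>\<pi>\<^sub>i\<^sub>,\<^sub>t(\<theta>) / \<pi>\<^sub>i\<^sub>,\<^sub>t(\<theta>\<^sup>\<star>)\<close> equals the prior ratio times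
  \<open>exp (- S\<^sub>t)\<close>, where \<open>S\<^sub>t\<close> is the sum of the first \<open>t\<close> log-likelihood ratios
  \<open>ln (l\<^sub>i(s|\<theta>\<^sup>\<star>) / l\<^sub>i(s|\<theta>))\<close>. These are bounded i.i.d. terms with mean \<open>K\<^sub>i(\<theta>\<^sup>\<star>,\<theta>)\<close>,
  which by the strict Gibbs inequality is positive unless the two marginals coincide (and then
  \<open>S\<^sub>t = 0\<close>). Hoeffding's inequality and Borel--Cantelli make \<open>S\<^sub>t\<close> eventually positive almost
  surely, hence bounded below, so \<open>\<pi>\<^sub>i\<^sub>,\<^sub>t(\<theta>\<^sup>\<star>)\<close> stays above a positive constant for all \<open>t\<close>.
  The min-rule preserves any such common lower bound: the numerator is a minimum of quantities
  above the bound and the normaliser is at most \<open>\<Sum>\<theta> \<pi>\<^sub>i\<^sub>,\<^sub>t(\<theta>) = 1\<close>.\<close>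

lemma indep_vars_PiM_coordinates:
  assumes "prob_space M"
  shows "prob_space.indep_vars (\<Pi>\<^sub>M i\<in>(UNIV::nat set). M) (\<lambda>_. M) (\<lambda>i \<omega>. \<omega> i) UNIV"
proof -
  interpret product_prob_space "\<lambda>_. M" "UNIV::nat set"
    using assms by (intro product_prob_spaceI)
  have "(\<Pi>\<^sub>M i\<in>UNIV. distr (\<Pi>\<^sub>M i\<in>(UNIV::nat set). M) M (\<lambda>\<omega>. \<omega> i)) = (\<Pi>\<^sub>M i\<in>UNIV. M)"
    by (intro PiM_cong refl) (simp add: PiM_component)
  then show ?thesis
    by (subst P.indep_vars_iff_distr_eq_PiM) (auto simp: restrict_UNIV measurable_component_singleton)
qed

lemma iid_partial_sum_lower_tail:
  fixes f :: "'a \<Rightarrow> real"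
  assumes M: "prob_space M"
    and f_meas[measurable]: "f \<in> borel_measurable M"
    and f_range: "AE x in M. f x \<in> {a..b}" and "a < b"
    and mean_nonneg: "0 \<le> integral\<^sup>L M f"
  shows "measure (\<Pi>\<^sub>M i\<in>(UNIV::nat set). M)
           {\<omega> \<in> space (\<Pi>\<^sub>M i\<in>(UNIV::nat set). M). (\<Sum>s<n. f (\<omega> s)) \<le> n * integral\<^sup>L M f / 2}
         \<le> exp (- ((integral\<^sup>L M f)\<^sup>2 / (2 * (b - a)\<^sup>2)) * n)"
proof (cases "n = 0")
  case False
  let ?PM = "\<Pi>\<^sub>M i\<in>(UNIV::nat set). M"
  interpret product_prob_space "\<lambda>_. M" "UNIV::nat set"
    using M by (intro product_prob_spaceI)
  have [measurable]: "(\<lambda>\<omega>. \<omega> i) \<in> measurable ?PM M" for i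
    by (rule measurable_component_singleton) simp
  have distr_coord: "distr ?PM borel (\<lambda>\<omega>. f (\<omega> i)) = distr M borel f" for i
  proof -
    have "distr ?PM borel (\<lambda>\<omega>. f (\<omega> i)) = distr (distr ?PM M (\<lambda>\<omega>. \<omega> i)) borel f"
      by (subst distr_distr) (auto simp: comp_def)
    then show ?thesis by (simp add: PiM_component)
  qed
  have mean: "P.expectation (\<lambda>\<omega>. f (\<omega> 0)) = integral\<^sup>L M f"
  proof -
    have "P.expectation (\<lambda>\<omega>. f (\<omega> 0)) = integral\<^sup>L (distr ?PM M (\<lambda>\<omega>. \<omega> 0)) f"
      by (subst integral_distr) auto
    then show ?thesis by (simp add: PiM_component)
  qed
  interpret Hoeffding_ineq_iid ?PM "{..<n}" "\<lambda>i \<omega>. f (\<omega> i)" "\<lambda>\<omega>. f (\<omega> 0)" a b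
    "P.expectation (\<lambda>\<omega>. f (\<omega> 0))"
  proof unfold_locales
    show "P.indep_vars (\<lambda>_. borel) (\<lambda>i \<omega>. f (\<omega> i)) {..<n}"
      by (rule P.indep_vars_subset[OF P.indep_vars_compose2[OF indep_vars_PiM_coordinates[OF M]]])
         auto
    show "AE \<omega> in ?PM. f (\<omega> 0) \<in> {a..b}"
      using f_range by (rule AE_component[rotated]) simp
  qed (auto simp: distr_coord)
  have "measure ?PM {\<omega> \<in> space ?PM. (\<Sum>s<n. f (\<omega> s)) \<le> n * integral\<^sup>L M f / 2}
      \<le> exp (- 2 * (n * integral\<^sup>L M f / 2)\<^sup>2 / (n * (b - a)\<^sup>2))"
    using Hoeffding_ineq_le[of "n * integral\<^sup>L M f / 2"] False \<open>a < b\<close> mean_nonneg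
    by (simp add: mean lessThan_empty_iff)
  also have "\<dots> = exp (- ((integral\<^sup>L M f)\<^sup>2 / (2 * (b - a)\<^sup>2)) * n)"
  proof -
    have "- 2 * (n * m / 2)\<^sup>2 / (n * d) = - (m\<^sup>2 / (2 * d)) * n" if "d > 0" for m d :: real
      using that False by (simp add: power2_eq_square field_simps)
    then show ?thesis using \<open>a < b\<close> by simp
  qed
  finally show ?thesis .
qed (simp add: M prob_space_PiM prob_space.prob_le_1)

lemma AE_eventually_partial_sums_gt_half_mean:
  fixes f :: "'a \<Rightarrow> real"
  assumes M: "prob_space M"
    and f_meas[measurable]: "f \<in> borel_measurable M"
    and f_range: "AE x in M. f x \<in> {a..b}" and "a < b"
    and mean_pos: "0 < integral\<^sup>L M f"
  shows "AE \<omega> in (\<Pi>\<^sub>M i\<in>(UNIV::nat set). M).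
           \<forall>\<^sub>F n in sequentially. n * integral\<^sup>L M f / 2 < (\<Sum>s<n. f (\<omega> s))"
proof -
  let ?PM = "\<Pi>\<^sub>M i\<in>(UNIV::nat set). M"
  interpret P: prob_space ?PM
    using M by (rule prob_space_PiM)
  define c where "c = (integral\<^sup>L M f)\<^sup>2 / (2 * (b - a)\<^sup>2)"
  have "c > 0"
    using mean_pos \<open>a < b\<close> by (simp add: c_def)
  define A where "A n = {\<omega> \<in> space ?PM. (\<Sum>s<n. f (\<omega> s)) \<le> n * integral\<^sup>L M f / 2}" for n
  have [measurable]: "A n \<in> P.events" for n
    unfolding A_def by measurable
  have "summable (\<lambda>n. P.prob (A n))"
  proof (rule summable_comparison_test)
    show "summable (\<lambda>n. exp (- c) ^ n)"
      using \<open>c > 0\<close> by (intro summable_geometric) simp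
    show "\<exists>N. \<forall>n\<ge>N. norm (P.prob (A n)) \<le> exp (- c) ^ n"
      using iid_partial_sum_lower_tail[OF M f_meas f_range \<open>a < b\<close>] mean_pos
      by (auto simp: A_def c_def exp_of_nat_mult[symmetric] mult.commute)
  qed
  then have "AE \<omega> in ?PM. \<forall>\<^sub>F n in sequentially. \<omega> \<in> space ?PM - A n"
    by (intro borel_cantelli_AE1) (auto simp: P.emeasure_eq_measure)
  then show ?thesis
    by (rule AE_mp) (auto simp: A_def elim!: eventually_mono)
qed

lemma eventually_ge_imp_bounded_below:
  fixes s :: "nat \<Rightarrow> 'a::linorder"
  assumes "\<forall>\<^sub>F n in sequentially. c \<le> s n"
  shows "\<exists>C. \<forall>n. C \<le> s n"
proof -
  obtain N where N: "\<And>n. n \<ge> N \<Longrightarrow> c \<le> s n"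
    using assms by (auto simp: eventually_sequentially)
  have "Min (insert c (s ` {..<N})) \<le> s n" for n
    using N[of n] by (cases "n < N") (auto intro: Min.coboundedI min.coboundedI1 order_trans[OF Min.coboundedI])
  then show ?thesis by blast
qed

lemma ln_less_minus_one:
  fixes x :: real
  assumes "0 < x" "x \<noteq> 1"
  shows "ln x < x - 1"
proof -
  define y where "y = sqrt x"
  have y: "0 < y" "y \<noteq> 1" "x = y * y"
    using assms by (auto simp: y_def)
  have "ln x = 2 * ln y"
    using y by (simp add: ln_mult)
  also have "\<dots> \<le> 2 * (y - 1)"
    using ln_le_minus_one[OF \<open>0 < y\<close>] by simp
  also have "\<dots> < x - 1"
  proof -
    have "(y - 1)\<^sup>2 > 0" using y by simp
    then show ?thesis using y by (simp add: power2_eq_square algebra_simps)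
  qed
  finally show ?thesis .
qed

lemma relative_entropy_pos:
  fixes p q :: "'a \<Rightarrow> real"
  assumes "finite S"
    and p_pos: "\<And>w. w \<in> S \<Longrightarrow> 0 < p w" and q_pos: "\<And>w. w \<in> S \<Longrightarrow> 0 < q w"
    and "(\<Sum>w\<in>S. p w) = 1" "(\<Sum>w\<in>S. q w) = 1"
    and "w0 \<in> S" "p w0 \<noteq> q w0"
  shows "0 < (\<Sum>w\<in>S. p w * ln (p w / q w))"
proof -
  have term_le: "p w * ln (q w / p w) \<le> q w - p w" if "w \<in> S" for w
  proof -
    have "p w * ln (q w / p w) \<le> p w * (q w / p w - 1)"
      using p_pos[OF that] q_pos[OF that] by (intro mult_left_mono ln_le_minus_one) auto
    also have "\<dots> = q w - p w"
      using p_pos[OF that] by (simp add: field_simps)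
    finally show ?thesis .
  qed
  have term_less: "p w0 * ln (q w0 / p w0) < q w0 - p w0"
  proof -
    have "q w0 / p w0 \<noteq> 1"
      using assms(7) p_pos[OF assms(6)] by (auto simp: divide_eq_1_iff)
    then have "p w0 * ln (q w0 / p w0) < p w0 * (q w0 / p w0 - 1)"
      using assms(6) p_pos q_pos by (intro mult_strict_left_mono ln_less_minus_one) auto
    also have "\<dots> = q w0 - p w0"
      using p_pos[OF assms(6)] by (simp add: field_simps)
    finally show ?thesis .
  qed
  have "(\<Sum>w\<in>S. p w * ln (q w / p w)) < (\<Sum>w\<in>S. q w - p w)"
    using \<open>finite S\<close> term_le term_less assms(6) by (intro sum_strict_mono_ex1) auto
  also have "\<dots> = 0"
    using assms(4,5) by (simp add: sum_subtractf)
  finally have "(\<Sum>w\<in>S. p w * ln (q w / p w)) < 0" .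
  moreover have "(\<Sum>w\<in>S. p w * ln (p w / q w)) = - (\<Sum>w\<in>S. p w * ln (q w / p w))"
    unfolding sum_negf[symmetric] using p_pos q_pos by (intro sum.cong refl) (simp add: ln_div algebra_simps)
  ultimately show ?thesis by simp
qed

definition log_lik_ratio :: "('h \<Rightarrow> ('v \<Rightarrow> 's) pmf) \<Rightarrow> 'v \<Rightarrow> 'h \<Rightarrow> 'h \<Rightarrow> 's \<Rightarrow> real" where
  "log_lik_ratio L i p q w = ln (marg L i p w / marg L i q w)"

lemma sum_marg_eq_1:
  assumes "finite (Sig i)" and "set_pmf (L \<theta>) \<subseteq> {s. \<forall>i. s i \<in> Sig i}"
  shows "(\<Sum>w\<in>Sig i. marg L i \<theta> w) = 1"
  unfolding marg_def using assms by (intro sum_pmf_eq_1) auto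

lemma expectation_log_lik_ratio:
  assumes "finite (Sig i)" and "set_pmf (L p) \<subseteq> {s. \<forall>i. s i \<in> Sig i}"
  shows "measure_pmf.expectation (L p) (\<lambda>s. log_lik_ratio L i p q (s i)) = KLi Sig L i p q"
proof -
  have "measure_pmf.expectation (L p) (\<lambda>s. log_lik_ratio L i p q (s i))
      = measure_pmf.expectation (map_pmf (\<lambda>s. s i) (L p)) (log_lik_ratio L i p q)"
    by simp
  also have "\<dots> = (\<Sum>w\<in>Sig i. pmf (map_pmf (\<lambda>s. s i) (L p)) w *\<^sub>R log_lik_ratio L i p q w)"
    using assms by (intro integral_measure_pmf) auto
  finally show ?thesis
    by (simp add: KLi_def log_lik_ratio_def marg_def)
qed

lemma AE_pathM_in_support: "AE \<omega> in pathM L \<theta>. \<forall>t. \<omega> t \<in> set_pmf (L \<theta>)"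
  unfolding pathM_def AE_all_countable
  by (intro allI AE_PiM_component) (auto simp: measure_pmf.prob_space_axioms AE_measure_pmf)

lemma AE_log_lik_ratio_sums_bounded_below:
  assumes sig_fin: "finite (Sig i)"
    and supp: "\<And>\<theta>. set_pmf (L \<theta>) \<subseteq> {s. \<forall>i. s i \<in> Sig i}"
    and marg_pos: "\<And>\<theta> w. w \<in> Sig i \<Longrightarrow> 0 < marg L i \<theta> w"
  shows "AE \<omega> in pathM L \<theta>s. \<exists>C. \<forall>t. C \<le> (\<Sum>s<t. log_lik_ratio L i \<theta>s \<theta> (\<omega> s i))"
proof (cases "\<forall>w\<in>Sig i. marg L i \<theta>s w = marg L i \<theta> w")
  case True
  show ?thesis
    using AE_pathM_in_support[of L \<theta>s]
  proof eventually_elim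
    case (elim \<omega>)
    then have "\<omega> s i \<in> Sig i" for s
      using supp[of \<theta>s] by auto
    then have "log_lik_ratio L i \<theta>s \<theta> (\<omega> s i) = 0" for s
      using True marg_pos by (simp add: log_lik_ratio_def)
    then show ?case by (intro exI[of _ 0]) simp
  qed
next
  case False
  then obtain w0 where "w0 \<in> Sig i" "marg L i \<theta>s w0 \<noteq> marg L i \<theta> w0"
    by blast
  then have KL_pos: "0 < KLi Sig L i \<theta>s \<theta>"
    unfolding KLi_def using sig_fin marg_pos sum_marg_eq_1[of Sig i L \<theta>s, OF sig_fin supp] sum_marg_eq_1[of Sig i L \<theta>, OF sig_fin supp]
    by (intro relative_entropy_pos) auto
  define B where "B = (\<Sum>w\<in>Sig i. \<bar>log_lik_ratio L i \<theta>s \<theta> w\<bar>)"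
  have "0 \<le> B"
    unfolding B_def by (intro sum_nonneg) simp
  have ratio_range: "AE s in measure_pmf (L \<theta>s). log_lik_ratio L i \<theta>s \<theta> (s i) \<in> {- B - 1..B + 1}"
  proof (rule AE_pmfI)
    fix s assume "s \<in> set_pmf (L \<theta>s)"
    then have "\<bar>log_lik_ratio L i \<theta>s \<theta> (s i)\<bar> \<le> B"
      using supp[of \<theta>s] sig_fin unfolding B_def by (intro member_le_sum) auto
    then show "log_lik_ratio L i \<theta>s \<theta> (s i) \<in> {- B - 1..B + 1}"
      by auto
  qed
  have "AE \<omega> in pathM L \<theta>s. \<forall>\<^sub>F t in sequentially.
      t * KLi Sig L i \<theta>s \<theta> / 2 < (\<Sum>s<t. log_lik_ratio L i \<theta>s \<theta> (\<omega> s i))"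
    using AE_eventually_partial_sums_gt_half_mean[OF measure_pmf.prob_space_axioms _ ratio_range]
      \<open>0 \<le> B\<close> KL_pos
    unfolding pathM_def expectation_log_lik_ratio[of Sig i L \<theta>s, OF sig_fin supp] by simp
  then show ?thesis
  proof eventually_elim
    case (elim \<omega>)
    then have "\<forall>\<^sub>F t in sequentially. 0 \<le> (\<Sum>s<t. log_lik_ratio L i \<theta>s \<theta> (\<omega> s i))"
    proof eventually_elim
      case (elim t)
      moreover have "0 \<le> t * KLi Sig L i \<theta>s \<theta>"
        using KL_pos by simp
      ultimately show ?case by linarith
    qed
    then show ?case
      by (rule eventually_ge_imp_bounded_below)
  qed
qed

lemma pib_proportional_to_likelihood:
  fixes L :: "'h::finite \<Rightarrow> ('v \<Rightarrow> 's) pmf"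
  assumes marg_pos: "\<And>t \<theta>. 0 < marg L i \<theta> (\<omega> t i)"
    and pi0_pos: "\<And>\<theta>. 0 < pi0 i \<theta>"
  shows "\<exists>c>0. \<forall>\<theta>. pib L pi0 \<omega> t i \<theta> = c * pi0 i \<theta> * (\<Prod>s<t. marg L i \<theta> (\<omega> s i))"
proof (induction t)
  case 0
  show ?case by (intro exI[of _ 1]) simp
next
  case (Suc t)
  then obtain c where "0 < c"
    and c: "\<And>\<theta>. pib L pi0 \<omega> t i \<theta> = c * pi0 i \<theta> * (\<Prod>s<t. marg L i \<theta> (\<omega> s i))"
    by blast
  define D where "D = (\<Sum>p\<in>UNIV. marg L i p (\<omega> t i) * pib L pi0 \<omega> t i p)"
  have "0 < D"
    unfolding D_def c by (intro sum_pos) (auto intro!: mult_pos_pos prod_pos \<open>0 < c\<close> marg_pos pi0_pos)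
  have "pib L pi0 \<omega> (Suc t) i \<theta> = marg L i \<theta> (\<omega> t i) * pib L pi0 \<omega> t i \<theta> / D" for \<theta>
    by (simp add: D_def)
  also have "\<dots> \<theta> = c / D * pi0 i \<theta> * (\<Prod>s<Suc t. marg L i \<theta> (\<omega> s i))" for \<theta>
    using \<open>0 < D\<close> by (simp add: c field_simps)
  finally have "pib L pi0 \<omega> (Suc t) i \<theta> = c / D * pi0 i \<theta> * (\<Prod>s<Suc t. marg L i \<theta> (\<omega> s i))" for \<theta> .
  then show ?case
    using \<open>0 < c\<close> \<open>0 < D\<close> by (intro exI[of _ "c / D"]) simp
qed

lemma pib_pos:
  fixes L :: "'h::finite \<Rightarrow> ('v \<Rightarrow> 's) pmf"
  assumes "\<And>t \<theta>. 0 < marg L i \<theta> (\<omega> t i)" and "\<And>\<theta>. 0 < pi0 i \<theta>"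
  shows "0 < pib L pi0 \<omega> t i \<theta>"
proof -
  obtain c where "0 < c" "\<And>\<theta>. pib L pi0 \<omega> t i \<theta> = c * pi0 i \<theta> * (\<Prod>s<t. marg L i \<theta> (\<omega> s i))"
    using pib_proportional_to_likelihood[of L i \<omega> pi0, OF assms] by blast
  then show ?thesis
    using assms by (auto intro!: mult_pos_pos prod_pos)
qed

lemma sum_pib_eq_1:
  fixes L :: "'h::finite \<Rightarrow> ('v \<Rightarrow> 's) pmf"
  assumes marg_pos: "\<And>t \<theta>. 0 < marg L i \<theta> (\<omega> t i)"
    and pi0_pos: "\<And>\<theta>. 0 < pi0 i \<theta>" and pi0_sum: "(\<Sum>\<theta>\<in>UNIV. pi0 i \<theta>) = 1"
  shows "(\<Sum>\<theta>\<in>UNIV. pib L pi0 \<omega> t i \<theta>) = 1"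
proof (cases t)
  case (Suc t')
  have "0 < (\<Sum>p\<in>UNIV. marg L i p (\<omega> t' i) * pib L pi0 \<omega> t' i p)"
    by (intro sum_pos) (auto intro!: mult_pos_pos marg_pos pib_pos pi0_pos)
  then show ?thesis
    by (simp add: Suc sum_divide_distrib[symmetric])
qed (simp add: pi0_sum)

lemma pib_bounded_below:
  fixes L :: "'h::finite \<Rightarrow> ('v \<Rightarrow> 's) pmf"
  assumes marg_pos: "\<And>t \<theta>. 0 < marg L i \<theta> (\<omega> t i)"
    and pi0_pos: "\<And>\<theta>. 0 < pi0 i \<theta>" and pi0_sum: "(\<Sum>\<theta>\<in>UNIV. pi0 i \<theta>) = 1"
    and llr_bdd: "\<And>\<theta>. \<exists>C. \<forall>t. C \<le> (\<Sum>s<t. log_lik_ratio L i \<theta>s \<theta> (\<omega> s i))"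
  shows "\<exists>e>0. \<forall>t. e \<le> pib L pi0 \<omega> t i \<theta>s"
proof -
  obtain C where C: "\<And>\<theta> t. C \<theta> \<le> (\<Sum>s<t. log_lik_ratio L i \<theta>s \<theta> (\<omega> s i))"
    using llr_bdd by metis
  define B where "B = (\<Sum>\<theta>\<in>UNIV. pi0 i \<theta> / pi0 i \<theta>s * exp (- C \<theta>))"
  have "0 < B"
    unfolding B_def by (intro sum_pos) (auto intro!: divide_pos_pos mult_pos_pos pi0_pos)
  have "1 / B \<le> pib L pi0 \<omega> t i \<theta>s" for t
  proof -
    obtain c where "0 < c"
      and c: "\<And>\<theta>. pib L pi0 \<omega> t i \<theta> = c * pi0 i \<theta> * (\<Prod>s<t. marg L i \<theta> (\<omega> s i))"
      using pib_proportional_to_likelihood[of L i \<omega> pi0, OF marg_pos pi0_pos] by blast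
    define P where "P \<theta> = (\<Prod>s<t. marg L i \<theta> (\<omega> s i))" for \<theta>
    have "0 < P \<theta>" for \<theta>
      unfolding P_def by (auto intro!: prod_pos marg_pos)
    have lik_bound: "P \<theta> \<le> P \<theta>s * exp (- C \<theta>)" for \<theta>
    proof -
      have "exp (C \<theta>) \<le> exp (\<Sum>s<t. log_lik_ratio L i \<theta>s \<theta> (\<omega> s i))"
        using C by simp
      also have "\<dots> = P \<theta>s / P \<theta>"
        by (simp add: P_def log_lik_ratio_def exp_sum marg_pos prod_dividef)
      finally show ?thesis
        using \<open>0 < P \<theta>\<close> by (simp add: exp_minus field_simps)
    qed
    have "pib L pi0 \<omega> t i \<theta> \<le> pib L pi0 \<omega> t i \<theta>s * (pi0 i \<theta> / pi0 i \<theta>s * exp (- C \<theta>))" for \<theta>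
    proof -
      have "pib L pi0 \<omega> t i \<theta> \<le> c * pi0 i \<theta> * (P \<theta>s * exp (- C \<theta>))"
        unfolding c P_def[symmetric] using lik_bound \<open>0 < c\<close> pi0_pos[of \<theta>] by (intro mult_left_mono) auto
      also have "\<dots> = pib L pi0 \<omega> t i \<theta>s * (pi0 i \<theta> / pi0 i \<theta>s * exp (- C \<theta>))"
        unfolding c P_def[symmetric] using pi0_pos[of \<theta>s] by (simp add: field_simps)
      finally show ?thesis .
    qed
    then have "(\<Sum>\<theta>\<in>UNIV. pib L pi0 \<omega> t i \<theta>) \<le> pib L pi0 \<omega> t i \<theta>s * B"
      unfolding B_def sum_distrib_left by (intro sum_mono)
    then show ?thesis
      using sum_pib_eq_1[of L i \<omega> pi0, OF marg_pos pi0_pos pi0_sum] \<open>0 < B\<close> by (simp add: field_simps)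
  qed
  then show ?thesis
    using \<open>0 < B\<close> by (intro exI[of _ "1 / B"]) simp
qed

lemma mub_pos:
  fixes L :: "'h::finite \<Rightarrow> ('v::finite \<Rightarrow> 's) pmf"
  assumes pib_pos: "\<And>t i \<theta>. 0 < pib L pi0 \<omega> t i \<theta>"
    and mu0_pos: "\<And>i \<theta>. 0 < mu0 i \<theta>"
  shows "0 < mub a E L pi0 mu0 \<omega> t i \<theta>"
proof (induction t arbitrary: i \<theta>)
  case (Suc t)
  have "0 < Min (insert (pib L pi0 \<omega> (Suc t) i p) ((\<lambda>j. mub a E L pi0 mu0 \<omega> t j p) ` {j. (j, i) \<in> E}))"
    for p using Suc.IH pib_pos by (simp del: pib.simps)
  then show ?case
    using Suc.IH by (simp add: sum_pos del: pib.simps)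
qed (simp add: mu0_pos)

lemma mub_bounded_below:
  fixes L :: "'h::finite \<Rightarrow> ('v::finite \<Rightarrow> 's) pmf"
  assumes pib_pos: "\<And>t i \<theta>. 0 < pib L pi0 \<omega> t i \<theta>"
    and sum_pib: "\<And>t i. (\<Sum>\<theta>\<in>UNIV. pib L pi0 \<omega> t i \<theta>) = 1"
    and pib_ge: "\<And>t i. e \<le> pib L pi0 \<omega> t i \<theta>s"
    and mu0_pos: "\<And>i \<theta>. 0 < mu0 i \<theta>"
    and mu0_ge: "\<And>i. e \<le> mu0 i \<theta>s"
  shows "e \<le> mub a E L pi0 mu0 \<omega> t i \<theta>s"
proof (induction t arbitrary: i)
  case (Suc t)
  define N where "N p = Min (insert (pib L pi0 \<omega> (Suc t) i p) ((\<lambda>j. mub a E L pi0 mu0 \<omega> t j p) ` {j. (j, i) \<in> E}))" for p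
  have N_pos: "0 < N p" for p
    unfolding N_def using pib_pos mub_pos[OF pib_pos mu0_pos] by (simp del: pib.simps)
  have "(\<Sum>p\<in>UNIV. N p) \<le> (\<Sum>p\<in>UNIV. pib L pi0 \<omega> (Suc t) i p)"
    unfolding N_def by (intro sum_mono Min_le) auto
  then have "(\<Sum>p\<in>UNIV. N p) \<le> 1"
    by (simp only: sum_pib)
  moreover have "0 < (\<Sum>p\<in>UNIV. N p)"
    by (intro sum_pos N_pos) auto
  ultimately have "N \<theta>s \<le> N \<theta>s / (\<Sum>p\<in>UNIV. N p)"
    using N_pos[of \<theta>s] by (simp add: le_divide_eq mult_left_le)
  moreover have "e \<le> N \<theta>s"
    unfolding N_def using Suc.IH pib_ge by (simp del: pib.simps)
  ultimately show ?case
    using Suc.IH by (simp add: N_def[symmetric] del: pib.simps)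
qed (simp add: mu0_ge)

definition typical_path :: "('h \<Rightarrow> ('v \<Rightarrow> 's) pmf) \<Rightarrow> 'h \<Rightarrow> (nat \<Rightarrow> 'v \<Rightarrow> 's) \<Rightarrow> bool" where
  "typical_path L \<theta>s \<omega> \<longleftrightarrow> (\<forall>t. \<omega> t \<in> set_pmf (L \<theta>s)) \<and>
     (\<forall>i \<theta>. \<exists>C. \<forall>t. C \<le> (\<Sum>s<t. log_lik_ratio L i \<theta>s \<theta> (\<omega> s i)))"

lemma AE_typical_path:
  fixes L :: "'h::finite \<Rightarrow> ('v::finite \<Rightarrow> 's) pmf"
  assumes "\<And>i. finite (Sig i)"
    and "\<And>\<theta>. set_pmf (L \<theta>) \<subseteq> {s. \<forall>i. s i \<in> Sig i}"
    and "\<And>i \<theta> w. w \<in> Sig i \<Longrightarrow> 0 < marg L i \<theta> w"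
  shows "AE \<omega> in pathM L \<theta>s. typical_path L \<theta>s \<omega>"
proof -
  have "AE \<omega> in pathM L \<theta>s. \<forall>i \<theta>. \<exists>C. \<forall>t. C \<le> (\<Sum>s<t. log_lik_ratio L i \<theta>s \<theta> (\<omega> s i))"
    by (intro eventually_all_finite allI) (rule AE_log_lik_ratio_sums_bounded_below[OF assms])
  with AE_pathM_in_support[of L \<theta>s] show ?thesis
    unfolding typical_path_def by eventually_elim simp
qed

lemma beliefs_bounded_below_on_typical_path:
  fixes L :: "'h::finite \<Rightarrow> ('v::finite \<Rightarrow> 's) pmf"
  assumes typical: "typical_path L \<theta>s \<omega>"
    and supp: "\<And>\<theta>. set_pmf (L \<theta>) \<subseteq> {s. \<forall>i. s i \<in> Sig i}"
    and marg_pos: "\<And>i \<theta> w. w \<in> Sig i \<Longrightarrow> 0 < marg L i \<theta> w"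
    and pi0_pos: "\<And>i \<theta>. 0 < pi0 i \<theta>" and pi0_sum: "\<And>i. (\<Sum>\<theta>\<in>UNIV. pi0 i \<theta>) = 1"
    and mu0_pos: "\<And>i \<theta>. 0 < mu0 i \<theta>"
  shows "\<exists>e. 0 < e \<and> e < 1 \<and>
           (\<forall>t i. e \<le> pib L pi0 \<omega> t i \<theta>s \<and> e \<le> mub a E L pi0 mu0 \<omega> t i \<theta>s)"
proof -
  have path_marg_pos: "0 < marg L i \<theta> (\<omega> t i)" for t i \<theta>
    using typical supp[of \<theta>s] unfolding typical_path_def by (intro marg_pos) blast
  have llr_bdd: "\<exists>C. \<forall>t. C \<le> (\<Sum>s<t. log_lik_ratio L i \<theta>s \<theta> (\<omega> s i))" for i \<theta>
    using typical unfolding typical_path_def by blast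
  have "\<exists>e>0. \<forall>t. e \<le> pib L pi0 \<omega> t i \<theta>s" for i
    using path_marg_pos pi0_pos pi0_sum llr_bdd by (rule pib_bounded_below)
  then obtain e_agent where e_agent_pos: "\<And>i. 0 < e_agent i"
    and e_agent_le: "\<And>i t. e_agent i \<le> pib L pi0 \<omega> t i \<theta>s"
    by metis
  define e where "e = min (1/2) (min (Min (range e_agent)) (Min (range (\<lambda>i. mu0 i \<theta>s))))"
  have "0 < e" "e < 1"
    unfolding e_def using e_agent_pos mu0_pos by auto
  have pib_ge: "e \<le> pib L pi0 \<omega> t i \<theta>s" for t i
    unfolding e_def by (rule order_trans[OF _ e_agent_le]) (simp add: min.coboundedI2 min.coboundedI1)
  have "e \<le> mu0 i \<theta>s" for i
    unfolding e_def by (simp add: min.coboundedI2)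
  moreover have "0 < pib L pi0 \<omega> t i \<theta>" for t i \<theta>
    using path_marg_pos pi0_pos by (rule pib_pos)
  moreover have "(\<Sum>\<theta>\<in>UNIV. pib L pi0 \<omega> t i \<theta>) = 1" for t i
    using path_marg_pos pi0_pos pi0_sum by (rule sum_pib_eq_1)
  ultimately have "e \<le> mub a E L pi0 mu0 \<omega> t i \<theta>s" for t i
    using pib_ge mu0_pos by (intro mub_bounded_below)
  with pib_ge \<open>0 < e\<close> \<open>e < 1\<close> show ?thesis
    by blast
qed

theorem lemma2:
  fixes a :: nat
    and E :: "('v::finite \<times> 'v) set"
    and Sig :: "'v \<Rightarrow> 's set"
    and L :: "'h::finite \<Rightarrow> ('v \<Rightarrow> 's) pmf"
    and \<theta>s :: 'h
    and pi0 mu0 :: "'v \<Rightarrow> 'h \<Rightarrow> real"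
  assumes a2: "a \<ge> 2"
    and sig_fin: "\<And>i. finite (Sig i)"
    and supp: "\<And>\<theta>. set_pmf (L \<theta>) \<subseteq> {s. \<forall>i. s i \<in> Sig i}"
    and marg_pos: "\<And>i \<theta> w. w \<in> Sig i \<Longrightarrow> marg L i \<theta> w > 0"
    and ident: "\<And>p q. p \<noteq> q \<Longrightarrow> \<exists>i. KLi Sig L i p q > 0"
    and strong: "\<And>i j. (i, j) \<in> E\<^sup>*"
    and pi0_pos: "\<And>i \<theta>. pi0 i \<theta> > 0"
    and mu0_pos: "\<And>i \<theta>. mu0 i \<theta> > 0"
    and pi0_sum: "\<And>i. (\<Sum>\<theta>\<in>UNIV. pi0 i \<theta>) = 1"
    and mu0_sum: "\<And>i. (\<Sum>\<theta>\<in>UNIV. mu0 i \<theta>) = 1"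
  shows "\<exists>\<Omega>b \<in> sets (pathM L \<theta>s). emeasure (pathM L \<theta>s) \<Omega>b = 1 \<and>
           (\<forall>\<omega>\<in>\<Omega>b. \<exists>\<eta>::real. 0 < \<eta> \<and> \<eta> < 1 \<and> (\<exists>t'::real. 0 < t' \<and>
              (\<forall>t::nat. real t \<ge> t' \<longrightarrow> (\<forall>i. pib L pi0 \<omega> t i \<theta>s \<ge> \<eta> \<and>
                                                   mub a E L pi0 mu0 \<omega> t i \<theta>s \<ge> \<eta>))))"
proof -
  interpret P: prob_space "pathM L \<theta>s"
    unfolding pathM_def by (intro prob_space_PiM measure_pmf.prob_space_axioms)
  obtain \<Omega>b where \<Omega>b_typical: "\<Omega>b \<subseteq> {\<omega> \<in> space (pathM L \<theta>s). typical_path L \<theta>s \<omega>}"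
    and "\<Omega>b \<in> P.events" and "P.prob \<Omega>b = 1"
    using AE_typical_path[OF sig_fin supp marg_pos] by (rule P.AE_E_prob)
  show ?thesis
  proof (intro bexI[of _ \<Omega>b] conjI ballI)
    show "emeasure (pathM L \<theta>s) \<Omega>b = 1"
      using \<open>P.prob \<Omega>b = 1\<close> by (simp add: P.emeasure_eq_measure)
    fix \<omega> assume "\<omega> \<in> \<Omega>b"
    then have "typical_path L \<theta>s \<omega>"
      using \<Omega>b_typical by blast
    then obtain \<eta> where "0 < \<eta>" "\<eta> < 1"
      and "\<forall>t i. \<eta> \<le> pib L pi0 \<omega> t i \<theta>s \<and> \<eta> \<le> mub a E L pi0 mu0 \<omega> t i \<theta>s"
      using beliefs_bounded_below_on_typical_path[of L \<theta>s \<omega> Sig pi0 mu0 a E, OF _ supp marg_pos pi0_pos pi0_sum mu0_pos]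
      by blast
    then show "\<exists>\<eta>::real. 0 < \<eta> \<and> \<eta> < 1 \<and> (\<exists>t'::real. 0 < t' \<and>
        (\<forall>t::nat. real t \<ge> t' \<longrightarrow> (\<forall>i. pib L pi0 \<omega> t i \<theta>s \<ge> \<eta> \<and> mub a E L pi0 mu0 \<omega> t i \<theta>s \<ge> \<eta>)))"
      \<comment> \<open>the bound holds for every \<open>t\<close>, so \<open>exI\<close> may take \<open>t' = \<eta>\<close> as well\<close>
      by (intro exI[of _ \<eta>] conjI allI impI) simp_all
  qed (rule \<open>\<Omega>b \<in> P.events\<close>)
qed

end
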